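(* For every fixed integer $r\ge1$ and every family $F$ of functions whose codomain has size $k$ and with $\mathrm{opt}_{\mathrm{std}}(F)\le r$, we have $\mathrm{opt}_{\mathrm{amb},r}(F)\le (rk)^{\mathrm{opt}_{\mathrm{std}}(F)}$.
   Context: Let $F$ be a family of functions from $X$ to $Y$. In online learning an adversary secretly fixes $f\in F$ and presents inputs; the learner guesses values of $f$. In the standard model each input is presented singly and after the guess the true value is revealed; $\mathrm{opt}_{\mathrm{std}}(F)$ is the maximum number of incorrect guesses under optimal play by both sides. In the $r$-delayed ambiguous reinforcement model, each round $i$ consists of $r$ inputs $x_{i,1},\dots,x_{i,r}$ given one at a time: the learner must guess $f(x_{i,j})$ before receiving $x_{i,j+1}$; after all $r$ guesses the adversary says YES if all $r$ guesses were correct and NO otherwise. A mistake is a round with answer NO. $\mathrm{opt}_{\mathrm{amb},r}(F)$ is the maximum number of mistakes under optimal play by both learner and adversary (answers consistent with some $f\in F$). *)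

theory Defs
  imports Main "HOL-Library.Extended_Nat"
begin

definition restr :: "('x \<Rightarrow> 'y) set \<Rightarrow> 'x \<Rightarrow> 'y \<Rightarrow> ('x \<Rightarrow> 'y) set" where
  "restr F x y = {f \<in> F. f x = y}"

text \<open>Standard model. std_force F n: starting from the version space F, the adversary
  has a strategy forcing at least n mistakes against every learner (least fixed point,
  i.e. every play following the strategy reaches n mistakes after finitely many rounds).
  In a round the adversary presents x, the learner guesses g, the adversary reveals a
  value y consistent with some remaining function.\<close>
inductive std_force :: "('x \<Rightarrow> 'y) set \<Rightarrow> nat \<Rightarrow> bool" where
  std_zero: "std_force F 0"
| std_step: "(\<And>g. \<exists>y. restr F x y \<noteq> {} \<and>
                 std_force (restr F x y) (if y = g then n else n - 1))
             \<Longrightarrow> std_force F n"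

definition opt_std :: "('x \<Rightarrow> 'y) set \<Rightarrow> enat" where
  "opt_std F = Sup {enat n | n. std_force F n}"

text \<open>r-delayed ambiguous reinforcement model. amb_force r F ps n: the current version
  space is F, the current round has so far consisted of the inputs/guesses ps
  (list of pairs (input, learner's guess)), and the adversary can force at least n
  further mistakes. When the round is complete (length ps = r), the adversary answers
  YES (all guesses correct) or NO (some guess incorrect), consistently with some f in F;
  a NO answer is a mistake.\<close>
definition yes_set :: "('x \<Rightarrow> 'y) set \<Rightarrow> ('x \<times> 'y) list \<Rightarrow> ('x \<Rightarrow> 'y) set" where
  "yes_set F ps = {f \<in> F. \<forall>(x, g) \<in> set ps. f x = g}"

definition no_set :: "('x \<Rightarrow> 'y) set \<Rightarrow> ('x \<times> 'y) list \<Rightarrow> ('x \<Rightarrow> 'y) set" where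
  "no_set F ps = {f \<in> F. \<exists>(x, g) \<in> set ps. f x \<noteq> g}"

inductive amb_force :: "nat \<Rightarrow> ('x \<Rightarrow> 'y) set \<Rightarrow> ('x \<times> 'y) list \<Rightarrow> nat \<Rightarrow> bool"
  for r :: nat where
  amb_zero: "amb_force r F ps 0"
| amb_input: "length ps < r \<Longrightarrow> (\<And>g. amb_force r F (ps @ [(x, g)]) n)
              \<Longrightarrow> amb_force r F ps n"
| amb_yes: "length ps = r \<Longrightarrow> yes_set F ps \<noteq> {} \<Longrightarrow> amb_force r (yes_set F ps) [] n
              \<Longrightarrow> amb_force r F ps n"
| amb_no: "length ps = r \<Longrightarrow> no_set F ps \<noteq> {} \<Longrightarrow> amb_force r (no_set F ps) [] (n - 1)
              \<Longrightarrow> amb_force r F ps n"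

definition opt_amb :: "nat \<Rightarrow> ('x \<Rightarrow> 'y) set \<Rightarrow> enat" where
  "opt_amb r F = Sup {enat n | n. amb_force r F [] n}"

end

theory Submission
  imports Defs
begin

(* The learner runs the standard optimal algorithm (SOA) on an active piece G0 of the version
   space, guessing within a round as if all earlier guesses of the round had been correct.
   A function of G0 refuted during the round disagrees with some SOA guess, so it lies in one of
   at most r(k-1) restrictions whose standard optimum is smaller than that of G0.  Giving a piece
   of standard optimum at most m the weight W^m with W > r(k-1), a NO answer replaces the weight
   W^m of G0 by at most r(k-1) W^(m-1) < W^m, so the total weight, initially W^opt_std(F), drops
   with every mistake, while a YES answer only shrinks the version space. *)

lemma std_force_mono: "std_force G n \<Longrightarrow> G \<subseteq> F \<Longrightarrow> std_force F n"
proof (induction G n arbitrary: F rule: std_force.induct)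
  case (std_zero G)
  show ?case by (rule std_force.std_zero)
next
  case (std_step G x n)
  show ?case
  proof (rule std_force.std_step[where x = x])
    fix g
    obtain y where "restr G x y \<noteq> {}"
      and "\<And>F'. restr G x y \<subseteq> F' \<Longrightarrow> std_force F' (if y = g then n else n - 1)"
      using std_step.IH[of g] by blast
    moreover have "restr G x y \<subseteq> restr F x y"
      using std_step.prems by (auto simp: restr_def)
    ultimately show "\<exists>y. restr F x y \<noteq> {} \<and> std_force (restr F x y) (if y = g then n else n - 1)"
      by blast
  qed
qed

lemma std_force_le: "std_force F n \<Longrightarrow> m \<le> n \<Longrightarrow> std_force F m"
proof (induction F n arbitrary: m rule: std_force.induct)
  case (std_zero F)
  then show ?case using std_force.std_zero by simp
next
  case (std_step F x n)
  show ?case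
  proof (rule std_force.std_step[where x = x])
    fix g
    obtain y where "restr F x y \<noteq> {}"
      and "\<And>m'. m' \<le> (if y = g then n else n - 1) \<Longrightarrow> std_force (restr F x y) m'"
      using std_step.IH[of g] by blast
    moreover have "(if y = g then m else m - 1) \<le> (if y = g then n else n - 1)"
      using std_step.prems by auto
    ultimately show "\<exists>y. restr F x y \<noteq> {} \<and> std_force (restr F x y) (if y = g then m else m - 1)"
      by blast
  qed
qed

lemma enat_le_opt_std_iff: "enat n \<le> opt_std F \<longleftrightarrow> std_force F n"
proof
  assume le: "enat n \<le> opt_std F"
  show "std_force F n"
  proof (cases n)
    case 0
    then show ?thesis by (simp add: std_force.std_zero)
  next
    case (Suc m)
    then have "enat m < opt_std F"
      using le by (simp add: Suc_ile_eq)
    then obtain n' where "std_force F n'" "m < n'"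
      unfolding opt_std_def less_Sup_iff by auto
    then show ?thesis using Suc std_force_le[of F n' n] by simp
  qed
next
  assume "std_force F n"
  then show "enat n \<le> opt_std F"
    unfolding opt_std_def by (auto intro: Sup_upper)
qed

lemma opt_std_mono: "G \<subseteq> F \<Longrightarrow> opt_std G \<le> opt_std F"
  unfolding opt_std_def by (rule Sup_subset_mono) (auto intro: std_force_mono)

lemma soa_guess:
  assumes "opt_std V \<le> enat m"
  shows "\<exists>g. \<forall>y. y \<noteq> g \<longrightarrow> restr V x y \<noteq> {} \<longrightarrow> opt_std (restr V x y) < enat m"
proof (rule ccontr)
  assume "\<not> ?thesis"
  then have bad: "\<exists>y. y \<noteq> g \<and> restr V x y \<noteq> {} \<and> std_force (restr V x y) m" for g
    by (auto simp: not_less enat_le_opt_std_iff)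
  have "std_force V (Suc m)"
  proof (rule std_force.std_step[where x = x])
    fix g
    obtain y where "y \<noteq> g" "restr V x y \<noteq> {}" "std_force (restr V x y) m"
      using bad by blast
    then show "\<exists>y. restr V x y \<noteq> {} \<and> std_force (restr V x y) (if y = g then Suc m else Suc m - 1)"
      by auto
  qed
  then have "enat (Suc m) \<le> opt_std V"
    by (simp add: enat_le_opt_std_iff)
  from this assms have "enat (Suc m) \<le> enat m"
    by (rule order_trans)
  then show False by simp
qed

lemma less_enat_imp_le_pred: "a < enat m \<Longrightarrow> 0 < m \<and> a \<le> enat (m - 1)"
  by (cases a) auto

lemma mult_power_pred_less: "l < W \<Longrightarrow> 0 < m \<Longrightarrow> l * W ^ (m - 1) < (W::nat) ^ m"
  by (metis mult_less_cancel2 neq0_conv not_less0 power_eq_0_iff power_eq_if)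

(* L lists the inactive pieces with bounds on their standard optimum and G0 is the active piece;
   N covers the functions of G0 refuted so far in the current round, each guess contributing at
   most card (UNIV :: 'y set) - 1 pieces of standard optimum below that of G0. *)
definition potential_bounded :: "nat \<Rightarrow> ('x \<Rightarrow> 'y::finite) set \<Rightarrow> ('x \<times> 'y) list \<Rightarrow> nat \<Rightarrow> bool" where
  "potential_bounded W F ps P \<longleftrightarrow> (\<exists>L G0 m0 N.
     F \<subseteq> G0 \<union> \<Union>(fst ` set L) \<and> (\<forall>(G, m) \<in> set L. opt_std G \<le> enat m) \<and> opt_std G0 \<le> enat m0
     \<and> no_set G0 ps \<subseteq> \<Union>(set N) \<and> length N \<le> length ps * (card (UNIV :: 'y set) - 1)
     \<and> (\<forall>H \<in> set N. H \<noteq> {} \<longrightarrow> opt_std H < enat m0)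
     \<and> (\<Sum>(G, m)\<leftarrow>L. W ^ m) + W ^ m0 \<le> P)"

lemma potential_boundedE:
  fixes F :: "('x \<Rightarrow> 'y::finite) set"
  assumes "potential_bounded W F ps P"
  obtains L G0 m0 N where "F \<subseteq> G0 \<union> \<Union>(fst ` set L)" "\<forall>(G, m) \<in> set L. opt_std G \<le> enat m"
    "opt_std G0 \<le> enat m0" "no_set G0 ps \<subseteq> \<Union>(set N)"
    "length N \<le> length ps * (card (UNIV :: 'y set) - 1)"
    "\<forall>H \<in> set N. H \<noteq> {} \<longrightarrow> opt_std H < enat m0"
    "(\<Sum>(G, m)\<leftarrow>L. W ^ m) + W ^ m0 \<le> P"
  using assms unfolding potential_bounded_def by (elim exE conjE) blast

lemma potential_bounded_start:
  assumes "F \<subseteq> \<Union>(fst ` set L)" "\<forall>(G, m) \<in> set L. opt_std G \<le> enat m" "L \<noteq> []"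
  shows "potential_bounded W F [] (\<Sum>(G, m)\<leftarrow>L. W ^ m)"
proof -
  obtain G0 m0 L' where L: "L = (G0, m0) # L'"
    using \<open>L \<noteq> []\<close> by (metis list.exhaust prod.exhaust)
  have "F \<subseteq> G0 \<union> \<Union>(fst ` set L')" "\<forall>(G, m) \<in> set L'. opt_std G \<le> enat m"
    "opt_std G0 \<le> enat m0" "(\<Sum>(G, m)\<leftarrow>L. W ^ m) = (\<Sum>(G, m)\<leftarrow>L'. W ^ m) + W ^ m0"
    using assms L by auto
  moreover have "no_set G0 [] = {}"
    by (simp add: no_set_def)
  ultimately show ?thesis
    unfolding potential_bounded_def by (intro exI[of _ L'] exI[of _ G0] exI[of _ m0] exI[of _ "[]"]) simp
qed

lemma potential_bounded_input:
  fixes F :: "('x \<Rightarrow> 'y::finite) set"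
  assumes "potential_bounded W F ps P"
  shows "\<exists>g. potential_bounded W F (ps @ [(x, g)]) P"
proof -
  obtain L G0 m0 N where cover: "F \<subseteq> G0 \<union> \<Union>(fst ` set L)"
    and bounds: "\<forall>(G, m) \<in> set L. opt_std G \<le> enat m"
    and G0_bound: "opt_std G0 \<le> enat m0" and refuted: "no_set G0 ps \<subseteq> \<Union>(set N)"
    and len: "length N \<le> length ps * (card (UNIV :: 'y set) - 1)"
    and small: "\<forall>H \<in> set N. H \<noteq> {} \<longrightarrow> opt_std H < enat m0"
    and weight: "(\<Sum>(G, m)\<leftarrow>L. W ^ m) + W ^ m0 \<le> P"
    using assms by (rule potential_boundedE)
  define V where "V = yes_set G0 ps"
  have "V \<subseteq> G0"
    unfolding V_def yes_set_def by auto
  from opt_std_mono[OF this] G0_bound have "opt_std V \<le> enat m0"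
    by (rule order_trans)
  then obtain g where g: "\<forall>y. y \<noteq> g \<longrightarrow> restr V x y \<noteq> {} \<longrightarrow> opt_std (restr V x y) < enat m0"
    using soa_guess[of V m0 x] by blast
  obtain ys where ys: "set ys = UNIV - {g}" "distinct ys"
    using finite_distinct_list[of "UNIV - {g}"] by auto
  then have "length ys = card (UNIV - {g})"
    by (metis distinct_card)
  then have len_ys: "length ys = card (UNIV :: 'y set) - 1"
    by (simp add: card_Diff_singleton)
  define N' where "N' = N @ map (restr V x) ys"
  have refuted': "no_set G0 (ps @ [(x, g)]) \<subseteq> \<Union>(set N')"
  proof
    fix f assume f: "f \<in> no_set G0 (ps @ [(x, g)])"
    show "f \<in> \<Union>(set N')"
    proof (cases "f \<in> no_set G0 ps")
      case True
      then show ?thesis using refuted unfolding N'_def by auto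
    next
      case False
      then have "f \<in> restr V x (f x)" "f x \<in> set ys"
        using f ys unfolding V_def no_set_def yes_set_def restr_def by auto
      then show ?thesis unfolding N'_def by auto
    qed
  qed
  have len': "length N' \<le> length (ps @ [(x, g)]) * (card (UNIV :: 'y set) - 1)"
    using len len_ys unfolding N'_def by simp
  have small': "\<forall>H \<in> set N'. H \<noteq> {} \<longrightarrow> opt_std H < enat m0"
    using small g ys unfolding N'_def by auto
  have "potential_bounded W F (ps @ [(x, g)]) P"
    unfolding potential_bounded_def
    by (intro exI[of _ L] exI[of _ G0] exI[of _ m0] exI[of _ N'] conjI
        cover bounds G0_bound refuted' len' small' weight)
  then show ?thesis ..
qed

lemma potential_bounded_yes:
  fixes F :: "('x \<Rightarrow> 'y::finite) set"
  assumes "potential_bounded W F ps P"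
  shows "potential_bounded W (yes_set F ps) [] P"
proof -
  obtain L G0 m0 where cover: "F \<subseteq> G0 \<union> \<Union>(fst ` set L)"
    and bounds: "\<forall>(G, m) \<in> set L. opt_std G \<le> enat m" and G0_bound: "opt_std G0 \<le> enat m0"
    and weight: "(\<Sum>(G, m)\<leftarrow>L. W ^ m) + W ^ m0 \<le> P"
    using assms by (rule potential_boundedE)
  have cover': "yes_set F ps \<subseteq> G0 \<union> \<Union>(fst ` set L)"
    using cover by (auto simp: yes_set_def)
  have refuted: "no_set G0 [] \<subseteq> \<Union>(set [])"
    by (simp add: no_set_def)
  show ?thesis
    unfolding potential_bounded_def
    by (intro exI[of _ L] exI[of _ G0] exI[of _ m0] exI[of _ "[]"] conjI cover' bounds G0_bound refuted weight) simp_all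
qed

lemma potential_bounded_no:
  fixes F :: "('x \<Rightarrow> 'y::finite) set"
  assumes "potential_bounded W F ps P" "length ps * (card (UNIV :: 'y set) - 1) < W" "no_set F ps \<noteq> {}"
  shows "\<exists>P' < P. potential_bounded W (no_set F ps) [] P'"
proof -
  obtain L G0 m0 N where cover: "F \<subseteq> G0 \<union> \<Union>(fst ` set L)" "\<forall>(G, m) \<in> set L. opt_std G \<le> enat m"
    and refuted: "no_set G0 ps \<subseteq> \<Union>(set N)" and len: "length N \<le> length ps * (card (UNIV :: 'y set) - 1)"
    and small: "\<forall>H \<in> set N. H \<noteq> {} \<longrightarrow> opt_std H < enat m0"
    and weight: "(\<Sum>(G, m)\<leftarrow>L. W ^ m) + W ^ m0 \<le> P"
    using assms(1) by (rule potential_boundedE)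
  define N' where "N' = filter (\<lambda>H. H \<noteq> {}) N"
  define L' where "L' = map (\<lambda>H. (H, m0 - 1)) N' @ L"
  have "no_set F ps \<subseteq> \<Union>(fst ` set L')"
    using cover(1) refuted unfolding L'_def N'_def no_set_def by fastforce
  moreover have "\<forall>(G, m) \<in> set L'. opt_std G \<le> enat m"
    using cover(2) small less_enat_imp_le_pred unfolding L'_def N'_def by auto
  moreover have "L' \<noteq> []"
    using calculation(1) assms(3) by auto
  ultimately have "potential_bounded W (no_set F ps) [] (\<Sum>(G, m)\<leftarrow>L'. W ^ m)"
    by (rule potential_bounded_start)
  moreover have "length N' * W ^ (m0 - 1) < W ^ m0"
  proof (cases "N' = []")
    case True
    then show ?thesis using assms(2) by simp
  next
    case False
    then have "0 < m0"
      using small less_enat_imp_le_pred unfolding N'_def by (fastforce simp: filter_empty_conv)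
    moreover have "length N' < W"
      using len assms(2) length_filter_le[of "\<lambda>H. H \<noteq> {}" N] unfolding N'_def by linarith
    ultimately show ?thesis by (rule mult_power_pred_less[rotated])
  qed
  then have "(\<Sum>(G, m)\<leftarrow>L'. W ^ m) < P"
    using weight unfolding L'_def by (simp add: comp_def sum_list_triv)
  ultimately show ?thesis by blast
qed

lemma amb_force_le_potential:
  fixes F :: "('x \<Rightarrow> 'y::finite) set"
  assumes "amb_force r F ps n" "r * (card (UNIV :: 'y set) - 1) < W" "potential_bounded W F ps P"
  shows "n \<le> P"
  using assms
proof (induction arbitrary: P rule: amb_force.induct)
  case (amb_zero F ps)
  then show ?case by simp
next
  case (amb_input ps F x n)
  obtain g where "potential_bounded W F (ps @ [(x, g)]) P"
    using potential_bounded_input[OF amb_input.prems(2)] by blast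
  then show ?case using amb_input.IH amb_input.prems(1) by blast
next
  case (amb_yes ps F n)
  then show ?case using potential_bounded_yes by blast
next
  case (amb_no ps F n)
  have "length ps * (card (UNIV :: 'y set) - 1) < W"
    using amb_no.hyps(1) amb_no.prems(1) by simp
  then obtain P' where "P' < P" "potential_bounded W (no_set F ps) [] P'"
    using potential_bounded_no amb_no.prems(2) amb_no.hyps(2) by blast
  then show ?case using amb_no.IH amb_no.prems(1) by fastforce
qed

theorem opt_amb_le_power_opt_std:
  fixes F :: "('x \<Rightarrow> 'y::finite) set"
  assumes "opt_std F \<le> enat d" "r * (card (UNIV :: 'y set) - 1) < W"
  shows "opt_amb r F \<le> enat (W ^ d)"
proof -
  have "potential_bounded W F [] (W ^ d)"
    using potential_bounded_start[of F "[(F, d)]"] assms(1) by simp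
  then have "n \<le> W ^ d" if "amb_force r F [] n" for n
    using amb_force_le_potential that assms(2) by blast
  then show ?thesis
    unfolding opt_amb_def by (auto intro!: Sup_least)
qed

theorem mainTheorem10:
  fixes F :: "('x \<Rightarrow> 'y::finite) set" and r k d :: nat
  assumes "r \<ge> 1"
    and "card (UNIV :: 'y set) = k"
    and "opt_std F = enat d"
    and "d \<le> r"
  shows "opt_amb r F \<le> enat ((r * k) ^ d)"
proof -
  have "0 < k"
    using assms(2) by (metis finite_UNIV_card_ge_0 finite)
  then have "r * (card (UNIV :: 'y set) - 1) < r * k"
    using assms(1,2) by simp
  moreover have "opt_std F \<le> enat d"
    using assms(3) by simp
  ultimately show ?thesis
    using opt_amb_le_power_opt_std by blast
qed

end
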